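(* Let $(Q,\cdot)$ be a quasigroup. Then: (1) if $Q$ satisfies $x(y(zy))=(x(yz))y$ for all $x,y,z$ (LG3-quasigroup), then $Q$ is a right loop; (2) if $Q$ satisfies $(xx)(yz)=((xx)y)z$ for all $x,y,z$ (LNQ-quasigroup), then $Q$ is a left loop; (3) if $Q$ satisfies $x(y(yz))=(x(yy))z$ for all $x,y,z$ (LC4-quasigroup), then $Q$ is a right loop; (4) if $Q$ satisfies $x(y(xz))=(x(yx))z$ for all $x,y,z$ (left Bol quasigroup), then $Q$ is a right loop; (5) if $Q$ satisfies $x(xy)=(xx)y$ for all $x,y$ (left alternative quasigroup), then $Q$ is a left loop.
   Context: A quasigroup is a set $Q$ with a binary operation $\cdot$ (written as juxtaposition) such that for all $a,b\in Q$ each of the equations $ax=b$ and $ya=b$ has a unique solution in $Q$. A quasigroup $Q$ is a left loop if there is $e\in Q$ with $ea=a$ for all $a\in Q$, and a right loop if there is $e\in Q$ with $ae=a$ for all $a\in Q$. *)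

theory Defs
  imports Main
begin

definition quasigroup :: "'a set \<Rightarrow> ('a \<Rightarrow> 'a \<Rightarrow> 'a) \<Rightarrow> bool" where
  "quasigroup Q m \<longleftrightarrow>
     (\<forall>a\<in>Q. \<forall>b\<in>Q. m a b \<in> Q) \<and>
     (\<forall>a\<in>Q. \<forall>b\<in>Q. \<exists>!x. x \<in> Q \<and> m a x = b) \<and>
     (\<forall>a\<in>Q. \<forall>b\<in>Q. \<exists>!y. y \<in> Q \<and> m y a = b)"

definition left_loop :: "'a set \<Rightarrow> ('a \<Rightarrow> 'a \<Rightarrow> 'a) \<Rightarrow> bool" where
  "left_loop Q m \<longleftrightarrow> quasigroup Q m \<and> (\<exists>e\<in>Q. \<forall>a\<in>Q. m e a = a)"

definition right_loop :: "'a set \<Rightarrow> ('a \<Rightarrow> 'a \<Rightarrow> 'a) \<Rightarrow> bool" where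
  "right_loop Q m \<longleftrightarrow> quasigroup Q m \<and> (\<exists>e\<in>Q. \<forall>a\<in>Q. m a e = a)"

end

theory Submission
  imports Defs
begin

text \<open>In each case one solves a single equation to get a local identity, e.g. \<open>y e = y\<close>
  for some fixed \<open>y\<close>, and the defining law propagates it to all of \<open>Q\<close>: either by
  cancelling a common factor, or because every element can be written in a shape to which the
  law applies.\<close>

definition LG3 :: "'a set \<Rightarrow> ('a \<Rightarrow> 'a \<Rightarrow> 'a) \<Rightarrow> bool" where
  "LG3 Q m \<longleftrightarrow> (\<forall>x\<in>Q. \<forall>y\<in>Q. \<forall>z\<in>Q. m x (m y (m z y)) = m (m x (m y z)) y)"

definition LNQ :: "'a set \<Rightarrow> ('a \<Rightarrow> 'a \<Rightarrow> 'a) \<Rightarrow> bool" where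
  "LNQ Q m \<longleftrightarrow> (\<forall>x\<in>Q. \<forall>y\<in>Q. \<forall>z\<in>Q. m (m x x) (m y z) = m (m (m x x) y) z)"

definition LC4 :: "'a set \<Rightarrow> ('a \<Rightarrow> 'a \<Rightarrow> 'a) \<Rightarrow> bool" where
  "LC4 Q m \<longleftrightarrow> (\<forall>x\<in>Q. \<forall>y\<in>Q. \<forall>z\<in>Q. m x (m y (m y z)) = m (m x (m y y)) z)"

definition left_Bol :: "'a set \<Rightarrow> ('a \<Rightarrow> 'a \<Rightarrow> 'a) \<Rightarrow> bool" where
  "left_Bol Q m \<longleftrightarrow> (\<forall>x\<in>Q. \<forall>y\<in>Q. \<forall>z\<in>Q. m x (m y (m x z)) = m (m x (m y x)) z)"

definition left_alternative :: "'a set \<Rightarrow> ('a \<Rightarrow> 'a \<Rightarrow> 'a) \<Rightarrow> bool" where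
  "left_alternative Q m \<longleftrightarrow> (\<forall>x\<in>Q. \<forall>y\<in>Q. m x (m x y) = m (m x x) y)"

lemma quasigroup_closed:
  assumes "quasigroup Q m" "a \<in> Q" "b \<in> Q"
  shows "m a b \<in> Q"
  using assms unfolding quasigroup_def by blast

lemma quasigroup_left_division_unique:
  assumes "quasigroup Q m" "a \<in> Q" "b \<in> Q"
  shows "\<exists>!x. x \<in> Q \<and> m a x = b"
  using assms unfolding quasigroup_def by simp

lemma quasigroup_right_division_unique:
  assumes "quasigroup Q m" "a \<in> Q" "b \<in> Q"
  shows "\<exists>!y. y \<in> Q \<and> m y a = b"
  using assms unfolding quasigroup_def by simp

lemma quasigroup_left_division:
  assumes "quasigroup Q m" "a \<in> Q" "b \<in> Q"
  obtains x where "x \<in> Q" "m a x = b"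
  using quasigroup_left_division_unique[OF assms] by blast

lemma quasigroup_right_division:
  assumes "quasigroup Q m" "a \<in> Q" "b \<in> Q"
  obtains y where "y \<in> Q" "m y a = b"
  using quasigroup_right_division_unique[OF assms] by blast

lemma quasigroup_left_cancel:
  assumes "quasigroup Q m" "a \<in> Q" "x \<in> Q" "y \<in> Q" "m a x = m a y"
  shows "x = y"
  using quasigroup_left_division_unique[OF assms(1,2) quasigroup_closed[OF assms(1,2,4)]] assms(3-5)
  by blast

lemma quasigroup_right_cancel:
  assumes "quasigroup Q m" "a \<in> Q" "x \<in> Q" "y \<in> Q" "m x a = m y a"
  shows "x = y"
  using quasigroup_right_division_unique[OF assms(1,2) quasigroup_closed[OF assms(1,4,2)]] assms(3-5)
  by blast

lemma left_loopI:
  assumes "quasigroup Q m" "e \<in> Q" "\<And>a. a \<in> Q \<Longrightarrow> m e a = a"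
  shows "left_loop Q m"
  using assms unfolding left_loop_def by blast

lemma right_loopI:
  assumes "quasigroup Q m" "e \<in> Q" "\<And>a. a \<in> Q \<Longrightarrow> m a e = a"
  shows "right_loop Q m"
  using assms unfolding right_loop_def by blast

lemma LG3_right_loop:
  assumes qg: "quasigroup Q m" and "Q \<noteq> {}" and law: "LG3 Q m"
  shows "right_loop Q m"
proof -
  obtain y where y: "y \<in> Q" using \<open>Q \<noteq> {}\<close> by blast
  obtain t where t: "t \<in> Q" "m y t = y" using quasigroup_left_division[OF qg y y] .
  obtain z where z: "z \<in> Q" "m z y = t" using quasigroup_right_division[OF qg y t(1)] .
  have yz: "m y z \<in> Q" using quasigroup_closed[OF qg y z(1)] .
  show ?thesis
  proof (rule right_loopI[OF qg yz])
    fix x assume x: "x \<in> Q"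
    have "m x y = m x (m y (m z y))" using z(2) t(2) by simp
    also have "\<dots> = m (m x (m y z)) y" using law x y z(1) unfolding LG3_def by blast
    finally show "m x (m y z) = x"
      using quasigroup_right_cancel[OF qg y] quasigroup_closed[OF qg x yz] x by metis
  qed
qed

lemma LNQ_left_loop:
  assumes qg: "quasigroup Q m" and "Q \<noteq> {}" and law: "LNQ Q m"
  shows "left_loop Q m"
proof -
  obtain y where y: "y \<in> Q" using \<open>Q \<noteq> {}\<close> by blast
  have yy: "m y y \<in> Q" using quasigroup_closed[OF qg y y] .
  obtain e where e: "e \<in> Q" "m (m y y) e = m y y" using quasigroup_left_division[OF qg yy yy] .
  show ?thesis
  proof (rule left_loopI[OF qg e(1)])
    fix w assume w: "w \<in> Q"
    have "m (m y y) (m e w) = m (m (m y y) e) w" using law y e(1) w unfolding LNQ_def by blast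
    also have "\<dots> = m (m y y) w" using e(2) by simp
    finally show "m e w = w"
      using quasigroup_left_cancel[OF qg yy] quasigroup_closed[OF qg e(1) w] w by metis
  qed
qed

lemma LC4_right_loop:
  assumes qg: "quasigroup Q m" and "Q \<noteq> {}" and law: "LC4 Q m"
  shows "right_loop Q m"
proof -
  obtain y where y: "y \<in> Q" using \<open>Q \<noteq> {}\<close> by blast
  have yy: "m y y \<in> Q" using quasigroup_closed[OF qg y y] .
  obtain e where e: "e \<in> Q" "m y e = y" using quasigroup_left_division[OF qg y y] .
  show ?thesis
  proof (rule right_loopI[OF qg e(1)])
    fix w assume w: "w \<in> Q"
    obtain x where x: "x \<in> Q" "m x (m y y) = w" using quasigroup_right_division[OF qg yy w] .
    have "w = m x (m y (m y e))" using x(2) e(2) by simp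
    also have "\<dots> = m (m x (m y y)) e" using law x(1) y e(1) unfolding LC4_def by blast
    finally show "m w e = w" using x(2) by simp
  qed
qed

lemma left_Bol_right_loop:
  assumes qg: "quasigroup Q m" and "Q \<noteq> {}" and law: "left_Bol Q m"
  shows "right_loop Q m"
proof -
  obtain y where y: "y \<in> Q" using \<open>Q \<noteq> {}\<close> by blast
  obtain e where e: "e \<in> Q" "m y e = y" using quasigroup_left_division[OF qg y y] .
  show ?thesis
  proof (rule right_loopI[OF qg e(1)])
    fix w assume w: "w \<in> Q"
    obtain u where u: "u \<in> Q" "m y u = w" using quasigroup_left_division[OF qg y w] .
    obtain v where v: "v \<in> Q" "m v y = u" using quasigroup_right_division[OF qg y u(1)] .
    have "w = m y (m v (m y e))" using u(2) v(2) e(2) by simp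
    also have "\<dots> = m (m y (m v y)) e" using law y v(1) e(1) unfolding left_Bol_def by blast
    finally show "m w e = w" using u(2) v(2) by simp
  qed
qed

lemma left_alternative_left_loop:
  assumes qg: "quasigroup Q m" and "Q \<noteq> {}" and law: "left_alternative Q m"
  shows "left_loop Q m"
proof -
  obtain y where y: "y \<in> Q" using \<open>Q \<noteq> {}\<close> by blast
  obtain f where f: "f \<in> Q" "m f y = y" using quasigroup_right_division[OF qg y y] .
  have ff: "m f f \<in> Q" using quasigroup_closed[OF qg f(1) f(1)] .
  have "m (m f f) y = m f (m f y)" using law f(1) y unfolding left_alternative_def by metis
  also have "\<dots> = m f y" using f(2) by simp
  finally have idem: "m f f = f" using quasigroup_right_cancel[OF qg y ff f(1)] by blast
  show ?thesis
  proof (rule left_loopI[OF qg f(1)])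
    fix w assume w: "w \<in> Q"
    have "m f (m f w) = m (m f f) w" using law f(1) w unfolding left_alternative_def by blast
    also have "\<dots> = m f w" using idem by simp
    finally show "m f w = w"
      using quasigroup_left_cancel[OF qg f(1)] quasigroup_closed[OF qg f(1) w] w by metis
  qed
qed

theorem mainTheorem4:
  fixes Q :: "'a set" and m :: "'a \<Rightarrow> 'a \<Rightarrow> 'a"
  assumes "quasigroup Q m" and "Q \<noteq> {}"
  shows "((\<forall>x\<in>Q. \<forall>y\<in>Q. \<forall>z\<in>Q. m x (m y (m z y)) = m (m x (m y z)) y) \<longrightarrow> right_loop Q m)
       \<and> ((\<forall>x\<in>Q. \<forall>y\<in>Q. \<forall>z\<in>Q. m (m x x) (m y z) = m (m (m x x) y) z) \<longrightarrow> left_loop Q m)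
       \<and> ((\<forall>x\<in>Q. \<forall>y\<in>Q. \<forall>z\<in>Q. m x (m y (m y z)) = m (m x (m y y)) z) \<longrightarrow> right_loop Q m)
       \<and> ((\<forall>x\<in>Q. \<forall>y\<in>Q. \<forall>z\<in>Q. m x (m y (m x z)) = m (m x (m y x)) z) \<longrightarrow> right_loop Q m)
       \<and> ((\<forall>x\<in>Q. \<forall>y\<in>Q. m x (m x y) = m (m x x) y) \<longrightarrow> left_loop Q m)"
  using LG3_right_loop[OF assms] LNQ_left_loop[OF assms] LC4_right_loop[OF assms]
    left_Bol_right_loop[OF assms] left_alternative_left_loop[OF assms]
  unfolding LG3_def LNQ_def LC4_def left_Bol_def left_alternative_def
  by blast

end
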